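(* Let $T\subset V$ be an open cone with basepoint $b\in T$, let $x\in\partial T\setminus[0]_T$, and let $f\in\mathcal B_T\cap A_T(x)$. Then $f$ satisfies $$f((1-\lambda)x+\lambda y)=\log\lambda+f(y)\qquad\text{whenever } \lambda>0,\ y\in T,\ (1-\lambda)x+\lambda y\in T,$$ so the extension $f|^{\tau(T,x)}:\tau(T,x)\to\mathbb R$, $f|^{\tau(T,x)}(y):=-\log\lambda_y+f((1-\lambda_y)x+\lambda_y y)$ (where $\lambda_y>0$ is any number with $(1-\lambda_y)x+\lambda_y y\in T$), is well defined; moreover $f|^{\tau(T,x)}\in\mathcal K_{\tau(T,x)}\cup\mathcal B_{\tau(T,x)}$.
   Context: $V$ is a finite-dimensional real vector space. An open cone is a nonempty open convex set $T\subset V$ with $\lambda T\subseteq T$ for all $\lambda>0$ and $0\notin T$; $\partial T$ its boundary. Write $x\le_T y$ iff $y-x\in\overline T$, $[0]_T:=\overline T\cap(-\overline T)$. $M_T(y/x):=\inf\{\lambda>0:y\le_T\lambda x\}$, $F_T(y,x):=\log M_T(y/x)$. Open tangent cone $\tau(T,x):=\{\lambda(y-x):\lambda>0,\ y\in T\}$ (an open cone containing $T$). For an open cone $S\ni b$: $f_{S,p}(y):=F_S(y,p)-F_S(b,p)$ ($p\in S$), $\mathcal K_S:=\{f_{S,p}:p\in S\}$; a sequence $(x_n)$ in $S$ converges in the Funk sense to $g$ if $F_S(\cdot,x_n)-F_S(b,x_n)\to g$ pointwise on $S$; a Funk horofunction of $S$ is such a limit not in $\mathcal K_S$; an almost-geodesic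 is a sequence $(x_l)$ in $S$ with, for some $\epsilon>0$, $\sum_{i=1}^l F_S(x_{i-1},x_i)\le F_S(x_0,x_l)+\epsilon$ for all $l\ge1$; $\mathcal B_S$ is the set of Funk horofunctions of $S$ that are Funk-sense limits of almost-geodesics. $A_T(x)$ is the set of Funk horofunctions of $T$ that are Funk-sense limits of sequences in $T$ converging to $x$ in the usual topology. *)

theory Defs
  imports "HOL-Analysis.Analysis"
begin

definition open_cone :: "'a::euclidean_space set \<Rightarrow> bool" where
  "open_cone T \<longleftrightarrow> T \<noteq> {} \<and> open T \<and> convex T \<and>
     (\<forall>l>0. \<forall>x\<in>T. l *\<^sub>R x \<in> T) \<and> 0 \<notin> T"

definition cone_le :: "'a::euclidean_space set \<Rightarrow> 'a \<Rightarrow> 'a \<Rightarrow> bool" where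
  "cone_le T x y \<longleftrightarrow> y - x \<in> closure T"

definition zero_class :: "'a::euclidean_space set \<Rightarrow> 'a set" where
  "zero_class T = closure T \<inter> uminus ` closure T"

definition funk_M :: "'a::euclidean_space set \<Rightarrow> 'a \<Rightarrow> 'a \<Rightarrow> real" where
  "funk_M T y x = Inf {l. l > 0 \<and> cone_le T y (l *\<^sub>R x)}"

definition funk :: "'a::euclidean_space set \<Rightarrow> 'a \<Rightarrow> 'a \<Rightarrow> real" where
  "funk T y x = ln (funk_M T y x)"

definition tangent_cone :: "'a::euclidean_space set \<Rightarrow> 'a \<Rightarrow> 'a set" where
  "tangent_cone T x = {l *\<^sub>R (y - x) | l y. l > 0 \<and> y \<in> T}"

definition funk_fn :: "'a::euclidean_space set \<Rightarrow> 'a \<Rightarrow> 'a \<Rightarrow> 'a \<Rightarrow> real" where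
  "funk_fn S b p y = funk S y p - funk S b p"

definition in_K :: "'a::euclidean_space set \<Rightarrow> 'a \<Rightarrow> ('a \<Rightarrow> real) \<Rightarrow> bool" where
  "in_K S b g \<longleftrightarrow> (\<exists>p\<in>S. \<forall>y\<in>S. g y = funk_fn S b p y)"

definition funk_converges :: "'a::euclidean_space set \<Rightarrow> 'a \<Rightarrow> (nat \<Rightarrow> 'a) \<Rightarrow> ('a \<Rightarrow> real) \<Rightarrow> bool" where
  "funk_converges S b xs g \<longleftrightarrow> (\<forall>n. xs n \<in> S) \<and>
     (\<forall>z\<in>S. (\<lambda>n. funk S z (xs n) - funk S b (xs n)) \<longlonglongrightarrow> g z)"

definition funk_horofunction :: "'a::euclidean_space set \<Rightarrow> 'a \<Rightarrow> ('a \<Rightarrow> real) \<Rightarrow> bool" where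
  "funk_horofunction S b g \<longleftrightarrow> (\<exists>xs. funk_converges S b xs g) \<and> \<not> in_K S b g"

definition almost_geodesic :: "'a::euclidean_space set \<Rightarrow> (nat \<Rightarrow> 'a) \<Rightarrow> bool" where
  "almost_geodesic S xs \<longleftrightarrow> (\<forall>n. xs n \<in> S) \<and>
     (\<exists>e>0. \<forall>l\<ge>1. (\<Sum>i=1..l. funk S (xs (i - 1)) (xs i)) \<le> funk S (xs 0) (xs l) + e)"

definition in_B :: "'a::euclidean_space set \<Rightarrow> 'a \<Rightarrow> ('a \<Rightarrow> real) \<Rightarrow> bool" where
  "in_B S b g \<longleftrightarrow> funk_horofunction S b g \<and>
     (\<exists>xs. almost_geodesic S xs \<and> funk_converges S b xs g)"

definition in_A :: "'a::euclidean_space set \<Rightarrow> 'a \<Rightarrow> 'a \<Rightarrow> ('a \<Rightarrow> real) \<Rightarrow> bool" where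
  "in_A T b x g \<longleftrightarrow> funk_horofunction T b g \<and>
     (\<exists>xs. funk_converges T b xs g \<and> xs \<longlonglongrightarrow> x)"

definition tangent_ext :: "'a::euclidean_space set \<Rightarrow> 'a \<Rightarrow> ('a \<Rightarrow> real) \<Rightarrow> 'a \<Rightarrow> real" where
  "tangent_ext T x f y =
     (let l = (SOME l. l > 0 \<and> (1 - l) *\<^sub>R x + l *\<^sub>R y \<in> T)
      in - ln l + f ((1 - l) *\<^sub>R x + l *\<^sub>R y))"

end

theory Submission
  imports Defs
begin

text \<open>
  Let \<open>p\<^sub>n \<rightarrow> x\<close> have Funk limit \<open>f\<close>, let \<open>v \<in> T\<close> and \<open>u = c v + (1 - c) x\<close> with
  \<open>0 < c \<le> 1\<close>. Since \<open>u - c v\<close> lies in the closed cone, \<open>F(u, p\<^sub>n) - F(v, p\<^sub>n) \<ge> log c\<close>.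
  Conversely, a unit functional \<open>a\<^sub>n\<close> of the dual cone supporting \<open>T\<close> at
  \<open>M(u/p\<^sub>n) p\<^sub>n - u\<close> gives \<open>M(u/p\<^sub>n) \<le> M(v/p\<^sub>n) (c + (1 - c) a\<^sub>n(x) / r)\<close>, where \<open>r > 0\<close>
  bounds all unit dual functionals from below at \<open>v\<close>; and \<open>a\<^sub>n(x) \<rightarrow> 0\<close> because
  \<open>M(u/p\<^sub>n) \<rightarrow> \<infinity>\<close> as \<open>p\<^sub>n\<close> approaches the boundary. Hence \<open>f(u) = log c + f(v)\<close>, which makes
  the extension well defined and gives the invariance \<open>f(s + c x) = f(s)\<close>; the latter yields
  \<open>f(y) - f(s) \<le> F\<^sub>\<tau>(y, s)\<close> for the Funk metric of the tangent cone \<open>\<tau>\<close>.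

  Along an almost-geodesic \<open>q\<^sub>m\<close> with Funk limit \<open>f\<close> one has \<open>F(b, q\<^sub>m) + f(q\<^sub>m) \<rightarrow> 0\<close>, so
  \<open>F\<^sub>\<tau>(y, q\<^sub>m) + f(q\<^sub>m)\<close> is squeezed between \<open>f(y)\<close> and \<open>F(y, q\<^sub>m) + f(q\<^sub>m) \<rightarrow> f(y)\<close>.
  Hence \<open>q\<^sub>m\<close> Funk-converges in \<open>\<tau>\<close> to the extension of \<open>f\<close>, and it is still an
  almost-geodesic there.
\<close>

lemma open_cone_scaleR:
  assumes "open_cone S" "0 < c" "y \<in> S"
  shows "c *\<^sub>R y \<in> S"
  using assms by (auto simp: open_cone_def)

lemma open_cone_add:
  assumes S: "open_cone S" and "y \<in> S" "z \<in> S"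
  shows "y + z \<in> S"
proof -
  have "(1/2) *\<^sub>R (2 *\<^sub>R y) + (1/2) *\<^sub>R (2 *\<^sub>R z) \<in> S"
    using assms open_cone_scaleR[OF S, of 2] by (intro convexD) (auto simp: open_cone_def)
  then show ?thesis
    by simp
qed

lemma open_cone_add_closure:
  assumes S: "open_cone S" and y: "y \<in> S" and z: "z \<in> closure S"
  shows "y + z \<in> S"
proof -
  have "open S"
    using S by (simp add: open_cone_def)
  then obtain r where r: "0 < r" "ball y r \<subseteq> S"
    using y open_contains_ball by blast
  obtain z' where z': "z' \<in> S" "dist z z' < r"
    using closure_approachableD[OF z r(1)] by blast
  have "y + z - z' \<in> S"
    using z' r by (auto simp: dist_norm norm_minus_commute)
  from open_cone_add[OF S this z'(1)] show ?thesis
    by simp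
qed

lemma open_cone_zero_in_closure:
  assumes S: "open_cone S"
  shows "0 \<in> closure S"
proof -
  obtain t where t: "t \<in> S"
    using S by (auto simp: open_cone_def)
  have "(\<lambda>n. inverse (real (Suc n)) *\<^sub>R t) \<longlonglongrightarrow> 0 *\<^sub>R t"
    by (intro tendsto_scaleR LIMSEQ_inverse_real_of_nat tendsto_const)
  moreover have "inverse (real (Suc n)) *\<^sub>R t \<in> S" for n
    using open_cone_scaleR[OF S _ t] by simp
  ultimately show ?thesis
    unfolding closure_sequential scale_zero_left
    by (intro exI[where x = "\<lambda>n. inverse (real (Suc n)) *\<^sub>R t"]) blast
qed

lemma convex_cone_closure_open_cone:
  assumes S: "open_cone S"
  shows "convex_cone (closure S)"
proof -
  have "c *\<^sub>R y \<in> closure S" if y: "y \<in> closure S" and c: "0 \<le> c" for y c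
  proof (cases "c = 0")
    case True
    then show ?thesis
      using open_cone_zero_in_closure[OF S] by simp
  next
    case False
    have "c *\<^sub>R y \<in> closure ((*\<^sub>R) c ` S)"
      using y closure_scaleR by blast
    also have "\<dots> \<subseteq> closure S"
      using open_cone_scaleR[OF S] c False by (intro closure_mono) auto
    finally show ?thesis .
  qed
  then show ?thesis
    using S by (auto simp: convex_cone_def conic_def open_cone_def)
qed

lemma open_cone_uminus_notin_closure:
  assumes S: "open_cone S" and y: "y \<in> S"
  shows "- y \<notin> closure S"
proof
  assume "- y \<in> closure S"
  from open_cone_add_closure[OF S y this] have "0 \<in> S"
    by simp
  then show False
    using S by (simp add: open_cone_def)
qed

section \<open>The Funk gauge\<close>

lemma funk_M_eq_Inf: "funk_M S y p = Inf {l. 0 < l \<and> l *\<^sub>R p - y \<in> closure S}"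
  by (simp add: funk_M_def cone_le_def)

lemma funk_M_le:
  assumes "0 < l" "l *\<^sub>R p - y \<in> closure S"
  shows "funk_M S y p \<le> l"
  unfolding funk_M_eq_Inf using assms by (intro cInf_lower) (auto intro: bdd_belowI[of _ 0])

lemma open_cone_exists_dominating_scalar:
  assumes S: "open_cone S" and y: "y \<in> S" and p: "p \<in> S"
  obtains l where "0 < l" "l *\<^sub>R p - y \<in> S"
proof -
  have "open S"
    using S by (simp add: open_cone_def)
  then obtain r where r: "0 < r" "ball p r \<subseteq> S"
    using p open_contains_ball by blast
  define l where "l = 2 * norm y / r + 1"
  have l: "0 < l"
    using r(1) by (simp add: l_def add_nonneg_pos)
  have "norm y < r * l"
    using r(1) by (simp add: l_def algebra_simps add_pos_nonneg)
  then have "norm ((1 / l) *\<^sub>R y) < r"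
    using l by (simp add: field_simps)
  then have "p - (1 / l) *\<^sub>R y \<in> S"
    using r by (auto simp: dist_norm)
  from open_cone_scaleR[OF S l this] have "l *\<^sub>R p - y \<in> S"
    using l by (simp add: algebra_simps)
  with l show thesis
    by (rule that)
qed

lemma open_cone_dominating_scalars_bounded_below:
  assumes S: "open_cone S" and y: "y \<in> S" and p: "p \<in> S"
  obtains r where "0 < r" "\<And>l. 0 < l \<Longrightarrow> l *\<^sub>R p - y \<in> closure S \<Longrightarrow> r \<le> l"
proof -
  have np: "0 < norm p"
    using S p by (auto simp: open_cone_def)
  obtain \<rho> where \<rho>: "0 < \<rho>" "ball (- y) \<rho> \<subseteq> - closure S"
    using open_cone_uminus_notin_closure[OF S y] open_contains_ball[of "- closure S"] by blast
  have low: "\<rho> / norm p \<le> l" if l: "0 < l" "l *\<^sub>R p - y \<in> closure S" for l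
  proof -
    have "\<not> dist (- y) (l *\<^sub>R p - y) < \<rho>"
      using l(2) \<rho>(2) by (auto simp: subset_iff)
    then have "\<rho> \<le> l * norm p"
      using l(1) by (simp add: dist_norm)
    then show ?thesis
      using np by (simp add: pos_divide_le_eq)
  qed
  show thesis
    using \<rho>(1) np low by (intro that[of "\<rho> / norm p"]) simp_all
qed

lemma funk_M_attained:
  assumes S: "open_cone S" and y: "y \<in> S" and p: "p \<in> S"
  shows "0 < funk_M S y p" and "funk_M S y p *\<^sub>R p - y \<in> closure S"
proof -
  obtain r where r: "0 < r" "\<And>l. 0 < l \<Longrightarrow> l *\<^sub>R p - y \<in> closure S \<Longrightarrow> r \<le> l"
    using open_cone_dominating_scalars_bounded_below[OF S y p] by blast
  obtain l0 where l0: "0 < l0" "l0 *\<^sub>R p - y \<in> S"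
    using open_cone_exists_dominating_scalar[OF S y p] by blast
  define L where "L = {l. 0 < l \<and> l *\<^sub>R p - y \<in> closure S}"
  have "L = {r..} \<inter> (\<lambda>l. l *\<^sub>R p - y) -` closure S"
    using r by (force simp: L_def)
  then have "closed L"
    by (simp add: closed_Int continuous_closed_vimage)
  moreover have "L \<noteq> {}"
    using l0 closure_subset by (auto simp: L_def)
  moreover have "bdd_below L"
    by (auto simp: L_def intro: bdd_belowI[of _ 0])
  ultimately have "Inf L \<in> L"
    using closed_contains_Inf by blast
  then show "0 < funk_M S y p" and "funk_M S y p *\<^sub>R p - y \<in> closure S"
    by (simp_all add: funk_M_eq_Inf L_def[symmetric]) (simp_all add: L_def)
qed

lemma funk_M_notin:
  assumes S: "open_cone S" and y: "y \<in> S" and p: "p \<in> S"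
  shows "funk_M S y p *\<^sub>R p - y \<notin> S"
proof
  let ?M = "funk_M S y p"
  assume "?M *\<^sub>R p - y \<in> S"
  moreover have "open ((\<lambda>l. l *\<^sub>R p - y) -` S)"
    using S by (intro continuous_open_vimage) (auto simp: open_cone_def)
  ultimately obtain e where e: "0 < e" "ball ?M e \<subseteq> (\<lambda>l. l *\<^sub>R p - y) -` S"
    using open_contains_ball by blast
  define l where "l = ?M - min (e / 2) (?M / 2)"
  have M: "0 < ?M"
    using funk_M_attained(1)[OF S y p] .
  have "l \<in> ball ?M e"
    using e M by (simp add: l_def dist_real_def)
  then have "l *\<^sub>R p - y \<in> closure S"
    using e(2) closure_subset by blast
  moreover have "0 < l"
    using M by (simp add: l_def)
  ultimately have "?M \<le> l"
    by (rule funk_M_le[rotated])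
  then show False
    using e M by (simp add: l_def)
qed

lemma funk_M_mono:
  assumes S: "open_cone S" and y': "y' \<in> S" and p: "p \<in> S" and le: "y' - y \<in> closure S"
  shows "funk_M S y p \<le> funk_M S y' p"
proof (rule funk_M_le)
  show "0 < funk_M S y' p"
    using funk_M_attained(1)[OF S y' p] .
  have "funk_M S y' p *\<^sub>R p - y = (funk_M S y' p *\<^sub>R p - y') + (y' - y)"
    by simp
  also have "\<dots> \<in> closure S"
    using convex_cone_closure_open_cone[OF S] funk_M_attained(2)[OF S y' p] le
    by (rule convex_cone_add)
  finally show "funk_M S y' p *\<^sub>R p - y \<in> closure S" .
qed

lemma funk_M_scaleR:
  assumes S: "open_cone S" and y: "y \<in> S" and p: "p \<in> S" and c: "0 < c"
  shows "funk_M S (c *\<^sub>R y) p = c * funk_M S y p"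
proof (rule antisym)
  have K: "convex_cone (closure S)"
    using convex_cone_closure_open_cone[OF S] .
  have cy: "c *\<^sub>R y \<in> S"
    using open_cone_scaleR[OF S c y] .
  have "(c * funk_M S y p) *\<^sub>R p - c *\<^sub>R y = c *\<^sub>R (funk_M S y p *\<^sub>R p - y)"
    by (simp add: algebra_simps)
  also have "\<dots> \<in> closure S"
    using K c funk_M_attained(2)[OF S y p] by (simp add: convex_cone_scaleR)
  finally show "funk_M S (c *\<^sub>R y) p \<le> c * funk_M S y p"
    using funk_M_attained(1)[OF S y p] c by (intro funk_M_le) simp_all
  have "(funk_M S (c *\<^sub>R y) p / c) *\<^sub>R p - y = (1 / c) *\<^sub>R (funk_M S (c *\<^sub>R y) p *\<^sub>R p - c *\<^sub>R y)"
    using c by (simp add: algebra_simps)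
  also have "\<dots> \<in> closure S"
    using K c funk_M_attained(2)[OF S cy p] by (simp add: convex_cone_scaleR)
  finally have "funk_M S y p \<le> funk_M S (c *\<^sub>R y) p / c"
    using funk_M_attained(1)[OF S cy p] c by (intro funk_M_le) simp_all
  then show "c * funk_M S y p \<le> funk_M S (c *\<^sub>R y) p"
    using c by (simp add: pos_le_divide_eq mult.commute)
qed

lemma funk_M_triangle:
  assumes S: "open_cone S" and y: "y \<in> S" and s: "s \<in> S" and p: "p \<in> S"
  shows "funk_M S y p \<le> funk_M S y s * funk_M S s p"
proof (rule funk_M_le)
  let ?a = "funk_M S y s" and ?b = "funk_M S s p"
  have pos: "0 < ?a" "0 < ?b"
    using funk_M_attained(1)[OF S y s] funk_M_attained(1)[OF S s p] by auto
  then show "0 < ?a * ?b"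
    by simp
  have K: "convex_cone (closure S)"
    using convex_cone_closure_open_cone[OF S] .
  have "(?a * ?b) *\<^sub>R p - y = ?a *\<^sub>R (?b *\<^sub>R p - s) + (?a *\<^sub>R s - y)"
    by (simp add: algebra_simps)
  also have "\<dots> \<in> closure S"
    using K pos funk_M_attained(2)[OF S s p] funk_M_attained(2)[OF S y s]
    by (simp add: convex_cone_add convex_cone_scaleR)
  finally show "(?a * ?b) *\<^sub>R p - y \<in> closure S" .
qed

lemma funk_M_self:
  assumes S: "open_cone S" and p: "p \<in> S"
  shows "funk_M S p p = 1"
proof (rule antisym)
  show "funk_M S p p \<le> 1"
    using open_cone_zero_in_closure[OF S] by (intro funk_M_le) simp_all
  show "1 \<le> funk_M S p p"
  proof (rule ccontr)
    assume "\<not> 1 \<le> funk_M S p p"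
    then have "(1 - funk_M S p p) *\<^sub>R p \<in> S"
      using open_cone_scaleR[OF S _ p] by simp
    from open_cone_uminus_notin_closure[OF S this]
    have "funk_M S p p *\<^sub>R p - p \<notin> closure S"
      by (simp add: algebra_simps)
    then show False
      using funk_M_attained(2)[OF S p p] by simp
  qed
qed

lemma funk_M_subcone:
  assumes S: "open_cone S" and sub: "S \<subseteq> S'" and y: "y \<in> S" and p: "p \<in> S"
  shows "funk_M S' y p \<le> funk_M S y p"
  using funk_M_attained[OF S y p] closure_mono[OF sub] by (intro funk_M_le) auto

lemma funk_scaleR:
  assumes "open_cone S" "y \<in> S" "p \<in> S" "0 < c"
  shows "funk S (c *\<^sub>R y) p = ln c + funk S y p"
  using funk_M_scaleR[OF assms] funk_M_attained(1)[OF assms(1-3)] assms(4)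
  by (simp add: funk_def ln_mult)

lemma funk_triangle:
  assumes S: "open_cone S" and y: "y \<in> S" and s: "s \<in> S" and p: "p \<in> S"
  shows "funk S y p \<le> funk S y s + funk S s p"
proof -
  have pos: "0 < funk_M S y p" "0 < funk_M S y s" "0 < funk_M S s p"
    using funk_M_attained(1) assms by blast+
  with funk_M_triangle[OF assms]
  have "ln (funk_M S y p) \<le> ln (funk_M S y s * funk_M S s p)"
    by simp
  with pos show ?thesis
    by (simp add: funk_def ln_mult)
qed

lemma funk_self: "open_cone S \<Longrightarrow> p \<in> S \<Longrightarrow> funk S p p = 0"
  by (simp add: funk_def funk_M_self)

lemma funk_mono:
  assumes S: "open_cone S" and "y \<in> S" "y' \<in> S" "p \<in> S" "y' - y \<in> closure S"
  shows "funk S y p \<le> funk S y' p"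
  using funk_M_mono[OF S assms(3-5)] funk_M_attained(1)[OF S assms(2,4)] by (simp add: funk_def)

lemma funk_subcone:
  assumes S: "open_cone S" and S': "open_cone S'" and sub: "S \<subseteq> S'"
    and y: "y \<in> S" and p: "p \<in> S"
  shows "funk S' y p \<le> funk S y p"
proof -
  have "0 < funk_M S' y p"
    using funk_M_attained(1)[OF S'] sub y p by blast
  with funk_M_subcone[OF S sub y p] show ?thesis
    by (simp add: funk_def)
qed

lemma funk_converges_in: "funk_converges S b q f \<Longrightarrow> q n \<in> S"
  by (simp add: funk_converges_def)

lemma funk_converges_basepoint:
  assumes "funk_converges S b q f" "b \<in> S"
  shows "f b = 0"
proof -
  have "(\<lambda>n. 0) \<longlonglongrightarrow> f b"
    using assms unfolding funk_converges_def by fastforce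
  then show ?thesis
    using LIMSEQ_unique tendsto_const by blast
qed

lemma funk_converges_diff:
  assumes "funk_converges S b q f" "y \<in> S" "s \<in> S"
  shows "(\<lambda>n. funk S y (q n) - funk S s (q n)) \<longlonglongrightarrow> f y - f s"
proof -
  have "(\<lambda>n. (funk S y (q n) - funk S b (q n)) - (funk S s (q n) - funk S b (q n))) \<longlonglongrightarrow> f y - f s"
    using assms by (intro tendsto_diff) (auto simp: funk_converges_def)
  then show ?thesis
    by simp
qed

lemma funk_converges_le_funk:
  assumes S: "open_cone S" and q: "funk_converges S b q f" and y: "y \<in> S" and s: "s \<in> S"
  shows "f y \<le> funk S y s + f s"
proof -
  have "f y - f s \<le> funk S y s"
    using funk_converges_diff[OF q y s]
    by (rule tendsto_upperbound)
      (auto simp: funk_triangle[OF S y s funk_converges_in[OF q]] algebra_simps)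
  then show ?thesis
    by simp
qed

lemma funk_converges_scaleR:
  assumes S: "open_cone S" and q: "funk_converges S b q f" and y: "y \<in> S" and c: "0 < c"
  shows "f (c *\<^sub>R y) = ln c + f y"
proof -
  have "(\<lambda>n. funk S (c *\<^sub>R y) (q n) - funk S y (q n)) \<longlonglongrightarrow> f (c *\<^sub>R y) - f y"
    using funk_converges_diff[OF q open_cone_scaleR[OF S c y] y] .
  moreover have "funk S (c *\<^sub>R y) (q n) - funk S y (q n) = ln c" for n
    using funk_scaleR[OF S y funk_converges_in[OF q] c] by simp
  ultimately have "(\<lambda>n. ln c) \<longlonglongrightarrow> f (c *\<^sub>R y) - f y"
    by simp
  then show ?thesis
    using LIMSEQ_unique tendsto_const by fastforce
qed

section \<open>Supporting functionals\<close>

definition dual_cone :: "'a::euclidean_space set \<Rightarrow> 'a set" where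
  "dual_cone S = {a. \<forall>t\<in>S. 0 \<le> a \<bullet> t}"

lemma dual_cone_nonneg_closure:
  assumes "a \<in> dual_cone S" "z \<in> closure S"
  shows "0 \<le> a \<bullet> z"
proof -
  have "closure S \<subseteq> {z. 0 \<le> a \<bullet> z}"
    using assms(1) by (intro closure_minimal closed_halfspace_ge) (auto simp: dual_cone_def)
  then show ?thesis
    using assms(2) by auto
qed

lemma open_cone_supporting_functional:
  assumes S: "open_cone S" and z: "z \<in> closure S" "z \<notin> S"
  obtains a where "a \<in> dual_cone S" "norm a = 1" "a \<bullet> z = 0"
proof -
  have "z \<notin> rel_interior S"
    using z S by (simp add: rel_interior_open open_cone_def)
  then obtain a where a: "a \<noteq> 0" "\<And>y. y \<in> closure S \<Longrightarrow> a \<bullet> z \<le> a \<bullet> y"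
    using supporting_hyperplane_relative_frontier[OF _ z(1)] S unfolding open_cone_def by metis
  have "a \<in> dual_cone S"
    unfolding dual_cone_def
  proof (intro CollectI ballI)
    fix t assume t: "t \<in> S"
    show "0 \<le> a \<bullet> t"
    proof (rule ccontr)
      assume "\<not> 0 \<le> a \<bullet> t"
      then have neg: "a \<bullet> t < 0"
        by simp
      define k where "k = (\<bar>a \<bullet> z\<bar> + 1) / - (a \<bullet> t)"
      have "0 < k"
        unfolding k_def using neg by (intro divide_pos_pos) simp_all
      then have "a \<bullet> z \<le> k * (a \<bullet> t)"
        using a(2) open_cone_scaleR[OF S _ t] closure_subset by fastforce
      moreover have "k * (a \<bullet> t) = - (\<bar>a \<bullet> z\<bar> + 1)"
        using neg by (simp add: k_def)
      ultimately show False
        by linarith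
    qed
  qed
  moreover have "a \<bullet> z = 0"
    using a(2)[OF open_cone_zero_in_closure[OF S]] dual_cone_nonneg_closure[OF \<open>a \<in> dual_cone S\<close> z(1)]
    by simp
  ultimately show thesis
    using a(1) by (intro that[of "a /\<^sub>R norm a"]) (simp_all add: dual_cone_def)
qed

lemma open_cone_dual_unit_bounded_below:
  assumes S: "open_cone S" and t: "t \<in> S"
  obtains r where "0 < r" "\<And>a. a \<in> dual_cone S \<Longrightarrow> norm a = 1 \<Longrightarrow> r \<le> a \<bullet> t"
proof -
  have "open S"
    using S by (simp add: open_cone_def)
  then obtain r where r: "0 < r" "ball t r \<subseteq> S"
    using t open_contains_ball by blast
  have low: "r / 2 \<le> a \<bullet> t" if a: "a \<in> dual_cone S" "norm a = 1" for a
  proof -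
    have "dist t (t - (r / 2) *\<^sub>R a) < r"
      using r(1) a(2) by (simp add: dist_norm)
    then have "t - (r / 2) *\<^sub>R a \<in> S"
      using r(2) mem_ball by blast
    then have "0 \<le> a \<bullet> (t - (r / 2) *\<^sub>R a)"
      using a(1) by (simp add: dual_cone_def)
    moreover have "a \<bullet> a = 1"
      using a(2) by (simp add: dot_square_norm)
    ultimately show ?thesis
      by (simp add: inner_diff_right)
  qed
  show thesis
    by (rule that[of "r / 2", OF _ low]) (use r(1) in simp_all)
qed

lemma dual_cone_unit_pos:
  assumes "open_cone S" "t \<in> S" "a \<in> dual_cone S" "norm a = 1"
  shows "0 < a \<bullet> t"
proof (rule open_cone_dual_unit_bounded_below[OF assms(1,2)])
  fix r assume "0 < r" and low: "\<And>a. a \<in> dual_cone S \<Longrightarrow> norm a = 1 \<Longrightarrow> r \<le> a \<bullet> t"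
  from low[OF assms(3,4)] \<open>0 < r\<close> show ?thesis
    by linarith
qed

lemma funk_M_ge_dual:
  assumes S: "open_cone S" and y: "y \<in> S" and p: "p \<in> S"
    and a: "a \<in> dual_cone S" and ap: "0 < a \<bullet> p"
  shows "a \<bullet> y / (a \<bullet> p) \<le> funk_M S y p"
proof -
  have "0 \<le> a \<bullet> (funk_M S y p *\<^sub>R p - y)"
    using dual_cone_nonneg_closure[OF a funk_M_attained(2)[OF S y p]] .
  then have "a \<bullet> y \<le> funk_M S y p * (a \<bullet> p)"
    by (simp add: inner_diff_right)
  then show ?thesis
    using ap by (simp add: pos_divide_le_eq)
qed

lemma funk_M_supporting_functional:
  assumes S: "open_cone S" and y: "y \<in> S" and p: "p \<in> S"
  obtains a where "a \<in> dual_cone S" "norm a = 1" "a \<bullet> y = funk_M S y p * (a \<bullet> p)"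
proof -
  obtain a where a: "a \<in> dual_cone S" "norm a = 1" "a \<bullet> (funk_M S y p *\<^sub>R p - y) = 0"
    using open_cone_supporting_functional[OF S funk_M_attained(2)[OF S y p] funk_M_notin[OF S y p]] .
  from a(3) have "a \<bullet> y = funk_M S y p * (a \<bullet> p)"
    unfolding inner_diff_right inner_scaleR_right by linarith
  with a(1,2) show thesis
    by (rule that)
qed

section \<open>Funk limits at a boundary point\<close>

lemma open_cone_convex_comb_closure:
  assumes T: "open_cone T" and x: "x \<in> closure T" and v: "v \<in> T" and c: "0 < c" "c \<le> 1"
  shows "c *\<^sub>R v + (1 - c) *\<^sub>R x \<in> T"
proof -
  have "(1 - c) *\<^sub>R x \<in> closure T"
    using convex_cone_scaleR[OF convex_cone_closure_open_cone[OF T]] c(2) x by simp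
  then show ?thesis
    by (rule open_cone_add_closure[OF T open_cone_scaleR[OF T c(1) v]])
qed

lemma funk_convex_comb_closure_ge:
  assumes T: "open_cone T" and x: "x \<in> closure T" and v: "v \<in> T" and p: "p \<in> T"
    and c: "0 < c" "c \<le> 1"
  shows "ln c + funk T v p \<le> funk T (c *\<^sub>R v + (1 - c) *\<^sub>R x) p"
proof -
  have "(1 - c) *\<^sub>R x \<in> closure T"
    using convex_cone_scaleR[OF convex_cone_closure_open_cone[OF T]] c(2) x by simp
  then have "funk T (c *\<^sub>R v) p \<le> funk T (c *\<^sub>R v + (1 - c) *\<^sub>R x) p"
    using open_cone_convex_comb_closure[OF T x v c] open_cone_scaleR[OF T c(1) v] p
    by (intro funk_mono[OF T]) simp_all
  then show ?thesis
    using funk_scaleR[OF T v p c(1)] by simp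
qed

lemma funk_convex_comb_le_supporting:
  assumes T: "open_cone T" and v: "v \<in> T" and p: "p \<in> T" and c: "0 < c" "c \<le> 1"
    and a: "a \<in> dual_cone T" "0 < a \<bullet> p" and r: "0 < r" "r \<le> a \<bullet> v" and ax: "0 \<le> a \<bullet> x"
    and u: "c *\<^sub>R v + (1 - c) *\<^sub>R x \<in> T"
    and support: "a \<bullet> (c *\<^sub>R v + (1 - c) *\<^sub>R x) = funk_M T (c *\<^sub>R v + (1 - c) *\<^sub>R x) p * (a \<bullet> p)"
  shows "funk T (c *\<^sub>R v + (1 - c) *\<^sub>R x) p \<le> funk T v p + ln (c + (1 - c) * (a \<bullet> x) / r)"
proof -
  let ?u = "c *\<^sub>R v + (1 - c) *\<^sub>R x" and ?k = "c + (1 - c) * (a \<bullet> x) / r"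
  have e: "0 \<le> (1 - c) * (a \<bullet> x) / r"
    using c(2) ax r(1) by simp
  have "(1 - c) * (a \<bullet> x) = r * ((1 - c) * (a \<bullet> x) / r)"
    using r(1) by simp
  also have "\<dots> \<le> (a \<bullet> v) * ((1 - c) * (a \<bullet> x) / r)"
    using r(2) e by (rule mult_right_mono)
  finally have "funk_M T ?u p * (a \<bullet> p) \<le> (a \<bullet> v) * ?k"
    using support by (simp add: inner_add_right algebra_simps)
  also have "\<dots> \<le> (funk_M T v p * (a \<bullet> p)) * ?k"
    using funk_M_ge_dual[OF T v p a] e c(1) a(2)
    by (intro mult_right_mono) (simp_all add: pos_divide_le_eq)
  finally have "funk_M T ?u p * (a \<bullet> p) \<le> (funk_M T v p * ?k) * (a \<bullet> p)"
    by (simp add: ac_simps)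
  then have le: "funk_M T ?u p \<le> funk_M T v p * ?k"
    using a(2) by (rule mult_right_le_imp_le)
  have pos: "0 < funk_M T ?u p" "0 < funk_M T v p" "0 < ?k"
    using funk_M_attained(1)[OF T u p] funk_M_attained(1)[OF T v p] c(1) e by simp_all
  with le have "ln (funk_M T ?u p) \<le> ln (funk_M T v p * ?k)"
    by simp
  with pos show ?thesis
    by (simp add: funk_def ln_mult)
qed

lemma dual_functionals_tendsto_zero_at_boundary:
  assumes T: "open_cone T" and x: "x \<in> closure T" "x \<notin> T"
    and p: "\<And>n. p n \<in> T" and px: "p \<longlonglongrightarrow> x" and u: "u \<in> T"
    and a: "\<And>n. a n \<in> dual_cone T" "\<And>n. norm (a n) = 1"
      "\<And>n. a n \<bullet> u = funk_M T u (p n) * (a n \<bullet> p n)"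
  shows "(\<lambda>n. a n \<bullet> x) \<longlonglongrightarrow> 0"
proof -
  obtain a0 where a0: "a0 \<in> dual_cone T" "norm a0 = 1" "a0 \<bullet> x = 0"
    using open_cone_supporting_functional[OF T x] .
  have a0u: "0 < a0 \<bullet> u"
    using dual_cone_unit_pos[OF T u a0(1,2)] .
  \<comment> \<open>\<open>M(u/p\<^sub>n) \<ge> a0(u) / a0(p\<^sub>n) \<rightarrow> \<infinity>\<close>, where \<open>a0\<close> supports \<open>T\<close> at \<open>x\<close>\<close>
  have bound: "a n \<bullet> p n \<le> norm u / (a0 \<bullet> u) * (a0 \<bullet> p n)" for n
  proof -
    have a0p: "0 < a0 \<bullet> p n"
      using dual_cone_unit_pos[OF T p a0(1,2)] .
    have "a0 \<bullet> u / (a0 \<bullet> p n) * (a n \<bullet> p n) \<le> funk_M T u (p n) * (a n \<bullet> p n)"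
      using funk_M_ge_dual[OF T u p a0(1) a0p] less_imp_le[OF dual_cone_unit_pos[OF T p a(1,2)]]
      by (rule mult_right_mono)
    also have "\<dots> \<le> norm u"
      using norm_cauchy_schwarz[of "a n" u] a(2,3) by simp
    finally show ?thesis
      using a0p a0u by (simp add: field_simps)
  qed
  have upper: "a n \<bullet> x \<le> norm u / (a0 \<bullet> u) * (a0 \<bullet> p n) + norm (x - p n)" for n
  proof -
    have "a n \<bullet> (x - p n) \<le> norm (x - p n)"
      using norm_cauchy_schwarz[of "a n" "x - p n"] a(2) by simp
    then show ?thesis
      using bound[of n] by (simp add: inner_diff_right)
  qed
  have lower: "0 \<le> a n \<bullet> x" for n
    using dual_cone_nonneg_closure[OF a(1) x(1)] .
  have "(\<lambda>n. norm u / (a0 \<bullet> u) * (a0 \<bullet> p n) + norm (x - p n))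
      \<longlonglongrightarrow> norm u / (a0 \<bullet> u) * (a0 \<bullet> x) + norm (x - x)"
    by (intro tendsto_intros px)
  then have "(\<lambda>n. norm u / (a0 \<bullet> u) * (a0 \<bullet> p n) + norm (x - p n)) \<longlonglongrightarrow> 0"
    using a0(3) by simp
  then show ?thesis
    by (rule tendsto_sandwich[OF always_eventually[OF allI[OF lower]] always_eventually[OF allI[OF upper]]
          tendsto_const])
qed

lemma funk_limit_boundary_convex_comb:
  assumes T: "open_cone T" and x: "x \<in> closure T" "x \<notin> T"
    and p: "funk_converges T b p f" and px: "p \<longlonglongrightarrow> x"
    and v: "v \<in> T" and c: "0 < c" "c \<le> 1"
  shows "f (c *\<^sub>R v + (1 - c) *\<^sub>R x) = ln c + f v"
proof -
  define u where "u = c *\<^sub>R v + (1 - c) *\<^sub>R x"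
  have u: "u \<in> T"
    unfolding u_def using open_cone_convex_comb_closure[OF T x(1) v c] .
  have pT: "p n \<in> T" for n
    using funk_converges_in[OF p] .
  have "\<exists>a. a \<in> dual_cone T \<and> norm a = 1 \<and> a \<bullet> u = funk_M T u (p n) * (a \<bullet> p n)" for n
    by (rule funk_M_supporting_functional[OF T u pT[of n]]) blast
  then obtain a where a: "\<And>n. a n \<in> dual_cone T" "\<And>n. norm (a n) = 1"
      "\<And>n. a n \<bullet> u = funk_M T u (p n) * (a n \<bullet> p n)"
    by metis
  obtain r where r: "0 < r" "\<And>a. a \<in> dual_cone T \<Longrightarrow> norm a = 1 \<Longrightarrow> r \<le> a \<bullet> v"
    using open_cone_dual_unit_bounded_below[OF T v] by blast
  define D where "D n = funk T u (p n) - funk T v (p n)" for n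
  define k where "k = (\<lambda>n. c + (1 - c) * (a n \<bullet> x) / r)"
  have low: "ln c \<le> D n" for n
    using funk_convex_comb_closure_ge[OF T x(1) v pT[of n] c] unfolding D_def u_def by linarith
  have up: "D n \<le> ln (k n)" for n
  proof -
    have "funk T u (p n) \<le> funk T v (p n) + ln (k n)"
      unfolding u_def k_def
      by (rule funk_convex_comb_le_supporting[OF T v pT c a(1) dual_cone_unit_pos[OF T pT a(1,2)]
            r(1) r(2)[OF a(1,2)] dual_cone_nonneg_closure[OF a(1) x(1)] u[unfolded u_def]
            a(3)[unfolded u_def]])
    then show ?thesis
      unfolding D_def by linarith
  qed
  have "k \<longlonglongrightarrow> c + (1 - c) * 0 / r"
    unfolding k_def using dual_functionals_tendsto_zero_at_boundary[OF T x pT px u a]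
    by (intro tendsto_add tendsto_const tendsto_divide tendsto_mult) (use r(1) in simp_all)
  then have "(\<lambda>n. ln (k n)) \<longlonglongrightarrow> ln c"
    using c(1) r(1) by (intro tendsto_ln) simp_all
  then have "D \<longlonglongrightarrow> ln c"
    by (rule tendsto_sandwich[OF always_eventually[OF allI[OF low]] always_eventually[OF allI[OF up]]
          tendsto_const])
  moreover have "D \<longlonglongrightarrow> f u - f v"
    unfolding D_def using funk_converges_diff[OF p u v] .
  ultimately have "ln c = f u - f v"
    by (rule LIMSEQ_unique)
  then show ?thesis
    unfolding u_def by simp
qed

lemma funk_limit_boundary_affine:
  assumes T: "open_cone T" and x: "x \<in> closure T" "x \<notin> T"
    and p: "funk_converges T b p f" and px: "p \<longlonglongrightarrow> x"
    and l: "0 < l" and y: "y \<in> T" and w: "(1 - l) *\<^sub>R x + l *\<^sub>R y \<in> T"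
  shows "f ((1 - l) *\<^sub>R x + l *\<^sub>R y) = ln l + f y"
proof (cases "l \<le> 1")
  case True
  then show ?thesis
    using funk_limit_boundary_convex_comb[OF T x p px y l] by (simp add: add.commute)
next
  case False
  have "y = (1 / l) *\<^sub>R ((1 - l) *\<^sub>R x + l *\<^sub>R y) + (1 - 1 / l) *\<^sub>R x"
    using l by (simp add: algebra_simps)
  then have "f y = ln (1 / l) + f ((1 - l) *\<^sub>R x + l *\<^sub>R y)"
    using funk_limit_boundary_convex_comb[OF T x p px w, of "1 / l"] False by simp
  then show ?thesis
    using l by (simp add: ln_div)
qed

lemma funk_limit_boundary_translation:
  assumes T: "open_cone T" and x: "x \<in> closure T" "x \<notin> T"
    and p: "funk_converges T b p f" and px: "p \<longlonglongrightarrow> x"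
    and s: "s \<in> T" and c: "0 < c"
  shows "f (s + c *\<^sub>R x) = f s"
proof -
  define l where "l = 1 / (1 + c)"
  have l: "0 < l" "l \<le> 1"
    using c by (auto simp: l_def)
  define w where "w = l *\<^sub>R s + (1 - l) *\<^sub>R x"
  have w: "w \<in> T"
    unfolding w_def using open_cone_convex_comb_closure[OF T x(1) s l] .
  have "s + c *\<^sub>R x = (1 + c) *\<^sub>R w"
    using c by (simp add: w_def l_def algebra_simps)
  then have "f (s + c *\<^sub>R x) = ln (1 + c) + f w"
    using funk_converges_scaleR[OF T p w] c by simp
  also have "\<dots> = ln (1 + c) + ln l + f s"
    unfolding w_def using funk_limit_boundary_convex_comb[OF T x p px s l] by simp
  also have "\<dots> = f s"
    using c by (simp add: l_def ln_div)
  finally show ?thesis .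
qed

section \<open>The tangent cone\<close>

lemma tangent_cone_iff:
  assumes T: "open_cone T"
  shows "v \<in> tangent_cone T x \<longleftrightarrow> (\<exists>c>0. v + c *\<^sub>R x \<in> T)"
proof
  assume "v \<in> tangent_cone T x"
  then obtain l y where v: "v = l *\<^sub>R (y - x)" and l: "0 < l" and y: "y \<in> T"
    by (auto simp: tangent_cone_def)
  have "v + l *\<^sub>R x = l *\<^sub>R y"
    by (simp add: v algebra_simps)
  with open_cone_scaleR[OF T l y] l show "\<exists>c>0. v + c *\<^sub>R x \<in> T"
    by auto
next
  assume "\<exists>c>0. v + c *\<^sub>R x \<in> T"
  then obtain c where c: "0 < c" "v + c *\<^sub>R x \<in> T"
    by blast
  have "v = c *\<^sub>R ((1 / c) *\<^sub>R (v + c *\<^sub>R x) - x)"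
    using c(1) by (simp add: algebra_simps)
  moreover have "(1 / c) *\<^sub>R (v + c *\<^sub>R x) \<in> T"
    using open_cone_scaleR[OF T _ c(2)] c(1) by simp
  ultimately show "v \<in> tangent_cone T x"
    unfolding tangent_cone_def using c(1) by blast
qed

lemma subset_tangent_cone:
  assumes T: "open_cone T" and x: "x \<in> closure T"
  shows "T \<subseteq> tangent_cone T x"
proof
  fix t assume "t \<in> T"
  then have "t + 1 *\<^sub>R x \<in> T"
    using open_cone_add_closure[OF T _ x] by simp
  then show "t \<in> tangent_cone T x"
    unfolding tangent_cone_iff[OF T] by (intro exI[of _ 1]) simp
qed

lemma tangent_cone_convex_comb_in_cone:
  assumes T: "open_cone T" and y: "y \<in> tangent_cone T x"
  shows "\<exists>l>0. (1 - l) *\<^sub>R x + l *\<^sub>R y \<in> T"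
proof -
  obtain c where c: "0 < c" "y + c *\<^sub>R x \<in> T"
    using y unfolding tangent_cone_iff[OF T] by blast
  define l where "l = 1 / (1 + c)"
  have l: "0 < l"
    using c(1) by (simp add: l_def)
  have "(1 - l) *\<^sub>R x + l *\<^sub>R y = l *\<^sub>R (y + c *\<^sub>R x)"
    using c(1) by (simp add: l_def algebra_simps divide_simps)
  then have "(1 - l) *\<^sub>R x + l *\<^sub>R y \<in> T"
    using open_cone_scaleR[OF T l c(2)] by simp
  with l show ?thesis
    by blast
qed

lemma convex_tangent_cone:
  assumes T: "open_cone T"
  shows "convex (tangent_cone T x)"
proof (rule convexI)
  fix v w :: 'a and u1 u2 :: real
  assume v: "v \<in> tangent_cone T x" and w: "w \<in> tangent_cone T x"
    and u: "0 \<le> u1" "0 \<le> u2" "u1 + u2 = 1"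
  obtain c1 where c1: "0 < c1" "v + c1 *\<^sub>R x \<in> T"
    using v unfolding tangent_cone_iff[OF T] by blast
  obtain c2 where c2: "0 < c2" "w + c2 *\<^sub>R x \<in> T"
    using w unfolding tangent_cone_iff[OF T] by blast
  have "u1 *\<^sub>R (v + c1 *\<^sub>R x) + u2 *\<^sub>R (w + c2 *\<^sub>R x) \<in> T"
    using T c1(2) c2(2) u by (intro convexD) (auto simp: open_cone_def)
  moreover have "u1 *\<^sub>R (v + c1 *\<^sub>R x) + u2 *\<^sub>R (w + c2 *\<^sub>R x)
      = (u1 *\<^sub>R v + u2 *\<^sub>R w) + (u1 * c1 + u2 * c2) *\<^sub>R x"
    by (simp add: algebra_simps)
  moreover have "0 < u1 * c1 + u2 * c2"
    using u c1(1) c2(1) by (cases "u1 = 0") (simp_all add: add_pos_nonneg)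
  ultimately show "u1 *\<^sub>R v + u2 *\<^sub>R w \<in> tangent_cone T x"
    unfolding tangent_cone_iff[OF T] by auto
qed

lemma open_cone_tangent_cone:
  assumes T: "open_cone T" and x: "x \<in> closure T" "x \<notin> T"
  shows "open_cone (tangent_cone T x)"
  unfolding open_cone_def
proof (intro conjI allI impI ballI)
  let ?C = "tangent_cone T x"
  show "?C \<noteq> {}"
    using subset_tangent_cone[OF T x(1)] T by (auto simp: open_cone_def)
  have "?C = (\<Union>c\<in>{0<..}. (\<lambda>v. v + c *\<^sub>R x) -` T)"
    by (auto simp: tangent_cone_iff[OF T])
  moreover have "open ((\<lambda>v. v + c *\<^sub>R x) -` T)" for c :: real
    using T by (intro continuous_open_vimage) (auto simp: open_cone_def)
  ultimately show "open ?C"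
    by auto
  show "convex ?C"
    using convex_tangent_cone[OF T] .
  fix l :: real and v assume l: "0 < l" and v: "v \<in> ?C"
  obtain c where c: "0 < c" "v + c *\<^sub>R x \<in> T"
    using v unfolding tangent_cone_iff[OF T] by blast
  have "l *\<^sub>R v + (l * c) *\<^sub>R x = l *\<^sub>R (v + c *\<^sub>R x)"
    by (simp add: algebra_simps)
  with open_cone_scaleR[OF T l c(2)] l c(1) show "l *\<^sub>R v \<in> ?C"
    unfolding tangent_cone_iff[OF T] by (intro exI[of _ "l * c"]) simp
next
  show "0 \<notin> tangent_cone T x"
  proof
    assume "0 \<in> tangent_cone T x"
    then obtain c where c: "0 < c" "c *\<^sub>R x \<in> T"
      unfolding tangent_cone_iff[OF T] by auto
    then show False
      using open_cone_scaleR[OF T _ c(2), of "1 / c"] x(2) by simp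
  qed
qed

lemma tangent_cone_add_line:
  assumes T: "open_cone T" and x: "x \<in> closure T" and v: "v \<in> tangent_cone T x"
  shows "v + r *\<^sub>R x \<in> tangent_cone T x"
proof -
  obtain c where c: "0 < c" "v + c *\<^sub>R x \<in> T"
    using v unfolding tangent_cone_iff[OF T] by blast
  have "(max c (r + 1) - c) *\<^sub>R x \<in> closure T"
    using convex_cone_scaleR[OF convex_cone_closure_open_cone[OF T]] x by simp
  from open_cone_add_closure[OF T c(2) this]
  have "(v + r *\<^sub>R x) + (max c (r + 1) - r) *\<^sub>R x \<in> T"
    by (simp add: algebra_simps)
  moreover have "0 < max c (r + 1) - r"
    by linarith
  ultimately show ?thesis
    unfolding tangent_cone_iff[OF T] by blast
qed

lemma tangent_cone_line_in_closure:
  assumes T: "open_cone T" and x: "x \<in> closure T" "x \<notin> T"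
  shows "r *\<^sub>R x \<in> closure (tangent_cone T x)"
proof -
  obtain t where t: "\<And>n. t n \<in> tangent_cone T x" "t \<longlonglongrightarrow> 0"
    using open_cone_zero_in_closure[OF open_cone_tangent_cone[OF T x]]
    unfolding closure_sequential by blast
  have "(\<lambda>n. t n + r *\<^sub>R x) \<longlonglongrightarrow> 0 + r *\<^sub>R x"
    by (intro tendsto_add t(2) tendsto_const)
  then show ?thesis
    unfolding closure_sequential using tangent_cone_add_line[OF T x(1) t(1)]
    by (intro exI[where x = "\<lambda>n. t n + r *\<^sub>R x"]) simp
qed

lemma funk_tangent_cone_affine:
  assumes T: "open_cone T" and x: "x \<in> closure T" "x \<notin> T"
    and z: "z \<in> tangent_cone T x" and q: "q \<in> tangent_cone T x" and l: "0 < l"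
  shows "funk (tangent_cone T x) ((1 - l) *\<^sub>R x + l *\<^sub>R z) q = ln l + funk (tangent_cone T x) z q"
proof -
  let ?C = "tangent_cone T x"
  have C: "open_cone ?C"
    using open_cone_tangent_cone[OF T x] .
  have lz: "l *\<^sub>R z \<in> ?C"
    using open_cone_scaleR[OF C l z] .
  have w: "(1 - l) *\<^sub>R x + l *\<^sub>R z \<in> ?C"
    using tangent_cone_add_line[OF T x(1) lz, of "1 - l"] by (simp add: add.commute)
  have "funk ?C ((1 - l) *\<^sub>R x + l *\<^sub>R z) q \<le> funk ?C (l *\<^sub>R z) q"
    using funk_mono[OF C w lz q] tangent_cone_line_in_closure[OF T x, of "l - 1"]
    by (simp add: algebra_simps)
  moreover have "funk ?C (l *\<^sub>R z) q \<le> funk ?C ((1 - l) *\<^sub>R x + l *\<^sub>R z) q"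
    using funk_mono[OF C lz w q] tangent_cone_line_in_closure[OF T x, of "1 - l"]
    by (simp add: algebra_simps)
  ultimately show ?thesis
    using funk_scaleR[OF C z q l] by simp
qed

lemma funk_limit_le_ln_tangent_dominated:
  assumes T: "open_cone T" and x: "x \<in> closure T"
    and q: "funk_converges T b q f"
    and inv: "\<And>s c. s \<in> T \<Longrightarrow> 0 < c \<Longrightarrow> f (s + c *\<^sub>R x) = f s"
    and y: "y \<in> T" and s: "s \<in> T" and l: "0 < l" and ls: "l *\<^sub>R s - y \<in> tangent_cone T x"
  shows "f y \<le> ln l + f s"
proof -
  obtain c where c: "0 < c" "l *\<^sub>R s - y + c *\<^sub>R x \<in> T"
    using ls unfolding tangent_cone_iff[OF T] by blast
  define s' where "s' = s + (c / l) *\<^sub>R x"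
  have s': "s' \<in> T"
    unfolding s'_def using open_cone_add_closure[OF T s] x c(1) l
      convex_cone_scaleR[OF convex_cone_closure_open_cone[OF T]] by simp
  have "l *\<^sub>R s' - y = l *\<^sub>R s - y + c *\<^sub>R x"
    using l by (simp add: s'_def algebra_simps)
  then have "l *\<^sub>R s' - y \<in> T"
    using c(2) by (simp only:)
  then have "l *\<^sub>R s' - y \<in> closure T"
    using closure_subset by blast
  with l have "funk_M T y s' \<le> l"
    by (rule funk_M_le)
  then have "funk T y s' \<le> ln l"
    using funk_M_attained(1)[OF T y s'] by (simp add: funk_def)
  moreover have "f s' = f s"
    unfolding s'_def using inv[OF s] c(1) l by simp
  ultimately show ?thesis
    using funk_converges_le_funk[OF T q y s'] by linarith
qed

lemma funk_limit_le_tangent_funk: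
  assumes T: "open_cone T" and x: "x \<in> closure T" "x \<notin> T"
    and q: "funk_converges T b q f"
    and inv: "\<And>s c. s \<in> T \<Longrightarrow> 0 < c \<Longrightarrow> f (s + c *\<^sub>R x) = f s"
    and y: "y \<in> T" and s: "s \<in> T"
  shows "f y \<le> funk (tangent_cone T x) y s + f s"
proof -
  let ?C = "tangent_cone T x"
  have C: "open_cone ?C"
    using open_cone_tangent_cone[OF T x] .
  have yC: "y \<in> ?C" and sC: "s \<in> ?C"
    using y s subset_tangent_cone[OF T x(1)] by auto
  let ?M = "funk_M ?C y s"
  have M: "0 < ?M"
    using funk_M_attained(1)[OF C yC sC] .
  have "f y - f s \<le> ln ?M + e" if e: "0 < e" for e
  proof -
    have "(?M * exp e - ?M) *\<^sub>R s \<in> ?C"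
      using open_cone_scaleR[OF C _ sC] M e by simp
    from open_cone_add_closure[OF C this funk_M_attained(2)[OF C yC sC]]
    have "(?M * exp e) *\<^sub>R s - y \<in> ?C"
      by (simp add: algebra_simps)
    from funk_limit_le_ln_tangent_dominated[OF T x(1) q inv y s _ this]
    have "f y \<le> ln (?M * exp e) + f s"
      using M by simp
    then show ?thesis
      using M by (simp add: ln_mult)
  qed
  then have "f y - f s \<le> ln ?M"
    by (rule field_le_epsilon)
  then show ?thesis
    by (simp add: funk_def)
qed

section \<open>Almost-geodesics\<close>

lemma funk_le_path_length:
  fixes q :: "nat \<Rightarrow> 'a::euclidean_space"
  assumes S: "open_cone S" and q: "\<And>i. q i \<in> S" and nm: "n \<le> m"
  shows "funk S (q n) (q m)
    \<le> (\<Sum>i=1..m. funk S (q (i - 1)) (q i)) - (\<Sum>i=1..n. funk S (q (i - 1)) (q i))"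
  using nm
proof (induction m rule: dec_induct)
  case base
  then show ?case
    using funk_self[OF S q] by simp
next
  case (step m)
  have "funk S (q n) (q (Suc m)) \<le> funk S (q n) (q m) + funk S (q m) (q (Suc m))"
    using funk_triangle[OF S q q q] .
  with step.IH show ?case
    by simp
qed

lemma almost_geodesic_defect:
  assumes S: "open_cone S" and q: "almost_geodesic S q"
  obtains \<delta> where "\<delta> \<longlonglongrightarrow> 0"
    "\<And>n m k. n \<le> m \<Longrightarrow> m \<le> k \<Longrightarrow>
      funk S (q n) (q m) + funk S (q m) (q k) \<le> funk S (q n) (q k) + \<delta> n"
proof -
  have qS: "q i \<in> S" for i
    using q by (simp add: almost_geodesic_def)
  define P where "P k = (\<Sum>i=1..k. funk S (q (i - 1)) (q i))" for k
  obtain e where e: "0 < e" "\<And>l. 1 \<le> l \<Longrightarrow> P l \<le> funk S (q 0) (q l) + e"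
    using q unfolding almost_geodesic_def P_def by blast
  \<comment> \<open>\<open>\<sigma>\<close> (path length minus distance) increases and is bounded by \<open>e\<close>;
    the defect is \<open>\<delta> n = lim \<sigma> - \<sigma> n\<close>.\<close>
  define \<sigma> where "\<sigma> k = P k - funk S (q 0) (q k)" for k
  have "incseq \<sigma>"
  proof (rule incseq_SucI)
    fix k
    show "\<sigma> k \<le> \<sigma> (Suc k)"
      using funk_triangle[OF S qS[of 0] qS[of k] qS[of "Suc k"]] by (simp add: \<sigma>_def P_def)
  qed
  moreover have "\<sigma> k \<le> e" for k
  proof (cases "k = 0")
    case True
    then show ?thesis
      using e(1) funk_self[OF S qS] by (simp add: \<sigma>_def P_def)
  next
    case False
    then show ?thesis
      using e(2)[of k] by (simp add: \<sigma>_def)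
  qed
  ultimately obtain L where L: "\<sigma> \<longlonglongrightarrow> L" "\<And>k. \<sigma> k \<le> L"
    using incseq_convergent by metis
  show thesis
  proof (rule that)
    show "(\<lambda>n. L - \<sigma> n) \<longlonglongrightarrow> 0"
      using tendsto_diff[OF tendsto_const L(1), of L] by simp
    fix n m k :: nat assume nm: "n \<le> m" and mk: "m \<le> k"
    have "funk S (q n) (q m) + funk S (q m) (q k) \<le> P k - P n"
      using funk_le_path_length[where q = q, OF S qS nm] funk_le_path_length[where q = q, OF S qS mk]
      by (simp add: P_def)
    also have "\<dots> = \<sigma> k - \<sigma> n + funk S (q 0) (q k) - funk S (q 0) (q n)"
      by (simp add: \<sigma>_def)
    also have "\<dots> \<le> funk S (q n) (q k) + (L - \<sigma> n)"
      using L(2)[of k] funk_triangle[OF S qS[of 0] qS[of n] qS[of k]] by simp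
    finally show "funk S (q n) (q m) + funk S (q m) (q k) \<le> funk S (q n) (q k) + (L - \<sigma> n)" .
  qed
qed

lemma funk_limit_defect_bound:
  assumes q: "funk_converges S b q f"
    and defect: "\<And>n m k. n \<le> m \<Longrightarrow> m \<le> k \<Longrightarrow>
      funk S (q n) (q m) + funk S (q m) (q k) \<le> funk S (q n) (q k) + \<delta> n"
    and nm: "n \<le> m"
  shows "f (q m) - f (q n) \<le> \<delta> n - funk S (q n) (q m)"
proof (rule tendsto_upperbound)
  show "(\<lambda>k. funk S (q m) (q k) - funk S (q n) (q k)) \<longlonglongrightarrow> f (q m) - f (q n)"
    using funk_converges_diff[OF q funk_converges_in[OF q] funk_converges_in[OF q]] .
  show "\<forall>\<^sub>F k in sequentially. funk S (q m) (q k) - funk S (q n) (q k) \<le> \<delta> n - funk S (q n) (q m)"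
    using eventually_ge_at_top[of m] by eventually_elim (use defect[OF nm] in fastforce)
qed simp

lemma funk_limit_busemann:
  assumes S: "open_cone S" and b: "b \<in> S" and q: "funk_converges S b q f"
    and \<delta>: "\<delta> \<longlonglongrightarrow> 0"
    and defect: "\<And>n m k. n \<le> m \<Longrightarrow> m \<le> k \<Longrightarrow>
      funk S (q n) (q m) + funk S (q m) (q k) \<le> funk S (q n) (q k) + \<delta> n"
  shows "(\<lambda>m. funk S b (q m) + f (q m)) \<longlonglongrightarrow> 0"
proof (rule order_tendstoI)
  fix a :: real assume "a < 0"
  moreover have "0 \<le> funk S b (q m) + f (q m)" for m
    using funk_converges_le_funk[OF S q b funk_converges_in[OF q]] funk_converges_basepoint[OF q b]
    by simp
  ultimately show "\<forall>\<^sub>F m in sequentially. a < funk S b (q m) + f (q m)"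
    by (intro always_eventually) (auto intro: less_le_trans)
next
  fix a :: real assume a: "0 < a"
  obtain n where n: "\<delta> n < a / 2"
    using order_tendstoD(2)[OF \<delta>, of "a / 2"] a by (auto simp: eventually_sequentially)
  have "(\<lambda>m. funk S (q n) (q m) - funk S b (q m)) \<longlonglongrightarrow> f (q n)"
    using q unfolding funk_converges_def by blast
  then have "\<forall>\<^sub>F m in sequentially. f (q n) - a / 2 < funk S (q n) (q m) - funk S b (q m)"
    by (rule order_tendstoD(1)) (use a in linarith)
  then show "\<forall>\<^sub>F m in sequentially. funk S b (q m) + f (q m) < a"
    using eventually_ge_at_top[of n]
  proof eventually_elim
    case (elim m)
    then show ?case
      using funk_limit_defect_bound[OF q defect, where n = n and m = m] n by simp
  qed
qed

lemma funk_converges_supercone: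
  assumes T: "open_cone T" and C: "open_cone C" and sub: "T \<subseteq> C" and b: "b \<in> T"
    and q: "funk_converges T b q f"
    and busemann: "(\<lambda>m. funk T b (q m) + f (q m)) \<longlonglongrightarrow> 0"
    and le: "\<And>y s. y \<in> T \<Longrightarrow> s \<in> T \<Longrightarrow> f y \<le> funk C y s + f s"
    and y: "y \<in> T"
  shows "(\<lambda>m. funk C y (q m) - funk C b (q m)) \<longlonglongrightarrow> f y"
proof -
  have qT: "q m \<in> T" for m
    using funk_converges_in[OF q] .
  have squeeze: "(\<lambda>m. funk C z (q m) + f (q m)) \<longlonglongrightarrow> f z" if z: "z \<in> T" for z
  proof (rule tendsto_sandwich[OF always_eventually always_eventually tendsto_const])
    have "(\<lambda>m. (funk T z (q m) - funk T b (q m)) + (funk T b (q m) + f (q m))) \<longlonglongrightarrow> f z + 0"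
      using q z busemann unfolding funk_converges_def by (intro tendsto_add) auto
    then show "(\<lambda>m. (funk T z (q m) - funk T b (q m)) + (funk T b (q m) + f (q m))) \<longlonglongrightarrow> f z"
      by simp
    show "\<forall>m. f z \<le> funk C z (q m) + f (q m)"
      using le[OF z qT] by blast
    show "\<forall>m. funk C z (q m) + f (q m) \<le> (funk T z (q m) - funk T b (q m)) + (funk T b (q m) + f (q m))"
      using funk_subcone[OF T C sub z qT] by simp
  qed
  have "(\<lambda>m. (funk C y (q m) + f (q m)) - (funk C b (q m) + f (q m))) \<longlonglongrightarrow> f y - f b"
    using squeeze[OF y] squeeze[OF b] by (rule tendsto_diff)
  then show ?thesis
    using funk_converges_basepoint[OF q b] by simp
qed

lemma almost_geodesic_supercone:
  assumes T: "open_cone T" and C: "open_cone C" and sub: "T \<subseteq> C"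
    and ag: "almost_geodesic T q" and q: "funk_converges T b q f"
    and defect: "\<And>n m k. n \<le> m \<Longrightarrow> m \<le> k \<Longrightarrow>
      funk T (q n) (q m) + funk T (q m) (q k) \<le> funk T (q n) (q k) + \<delta> n"
    and le: "\<And>y s. y \<in> T \<Longrightarrow> s \<in> T \<Longrightarrow> f y \<le> funk C y s + f s"
  shows "almost_geodesic C q"
proof -
  have qT: "q m \<in> T" for m
    using funk_converges_in[OF q] .
  obtain e where e: "0 < e" "\<And>l. 1 \<le> l \<Longrightarrow>
      (\<Sum>i=1..l. funk T (q (i - 1)) (q i)) \<le> funk T (q 0) (q l) + e"
    using ag unfolding almost_geodesic_def by blast
  have "0 \<le> \<delta> 0"
    using defect[of 0 0 0] funk_self[OF T qT] by simp
  moreover have "(\<Sum>i=1..l. funk C (q (i - 1)) (q i)) \<le> funk C (q 0) (q l) + (e + \<delta> 0)"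
    if l: "1 \<le> l" for l
  proof -
    have "(\<Sum>i=1..l. funk C (q (i - 1)) (q i)) \<le> (\<Sum>i=1..l. funk T (q (i - 1)) (q i))"
      by (intro sum_mono funk_subcone[OF T C sub qT qT])
    moreover have "funk T (q 0) (q l) \<le> \<delta> 0 + f (q 0) - f (q l)"
      using funk_limit_defect_bound[OF q defect, where n = 0 and m = l] by simp
    moreover have "f (q 0) - f (q l) \<le> funk C (q 0) (q l)"
      using le[OF qT qT, of 0 l] by simp
    ultimately show ?thesis
      using e(2)[OF l] by linarith
  qed
  ultimately show ?thesis
    using e(1) sub qT unfolding almost_geodesic_def by (intro conjI allI exI[of _ "e + \<delta> 0"]) auto
qed

section \<open>The extension to the tangent cone\<close>

lemma log_affine_rescale:
  fixes x y :: "'a::real_vector"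
  assumes aff: "\<And>l y. 0 < l \<Longrightarrow> y \<in> T \<Longrightarrow> (1 - l) *\<^sub>R x + l *\<^sub>R y \<in> T \<Longrightarrow>
      f ((1 - l) *\<^sub>R x + l *\<^sub>R y) = ln l + f y"
    and l1: "0 < l1" "(1 - l1) *\<^sub>R x + l1 *\<^sub>R y \<in> T"
    and l2: "0 < l2" "(1 - l2) *\<^sub>R x + l2 *\<^sub>R y \<in> T"
  shows "- ln l1 + f ((1 - l1) *\<^sub>R x + l1 *\<^sub>R y) = - ln l2 + f ((1 - l2) *\<^sub>R x + l2 *\<^sub>R y)"
proof -
  have "(1 - l2 / l1) *\<^sub>R x + (l2 / l1) *\<^sub>R ((1 - l1) *\<^sub>R x + l1 *\<^sub>R y)
      = ((1 - l2 / l1) + (l2 / l1) * (1 - l1)) *\<^sub>R x + ((l2 / l1) * l1) *\<^sub>R y"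
    by (simp only: scaleR_add_right scaleR_add_left scaleR_scaleR add.assoc)
  also have "\<dots> = (1 - l2) *\<^sub>R x + l2 *\<^sub>R y"
  proof -
    have "1 - l2 / l1 + l2 / l1 * (1 - l1) = 1 - l2" "l2 / l1 * l1 = l2"
      using l1(1) by (simp_all add: field_simps)
    then show ?thesis
      by (simp only:)
  qed
  finally have eq: "(1 - l2 / l1) *\<^sub>R x + (l2 / l1) *\<^sub>R ((1 - l1) *\<^sub>R x + l1 *\<^sub>R y)
      = (1 - l2) *\<^sub>R x + l2 *\<^sub>R y" .
  from aff[of "l2 / l1" "(1 - l1) *\<^sub>R x + l1 *\<^sub>R y", unfolded eq] l1 l2
  have "f ((1 - l2) *\<^sub>R x + l2 *\<^sub>R y) = ln (l2 / l1) + f ((1 - l1) *\<^sub>R x + l1 *\<^sub>R y)"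
    by simp
  then show ?thesis
    using l1(1) l2(1) by (simp add: ln_div)
qed

lemma tangent_ext_eq:
  fixes x y :: "'a::euclidean_space"
  assumes aff: "\<And>l y. 0 < l \<Longrightarrow> y \<in> T \<Longrightarrow> (1 - l) *\<^sub>R x + l *\<^sub>R y \<in> T \<Longrightarrow>
      f ((1 - l) *\<^sub>R x + l *\<^sub>R y) = ln l + f y"
    and l: "0 < l" "(1 - l) *\<^sub>R x + l *\<^sub>R y \<in> T"
  shows "tangent_ext T x f y = - ln l + f ((1 - l) *\<^sub>R x + l *\<^sub>R y)"
proof -
  define l' where "l' = (SOME l. 0 < l \<and> (1 - l) *\<^sub>R x + l *\<^sub>R y \<in> T)"
  have "0 < l' \<and> (1 - l') *\<^sub>R x + l' *\<^sub>R y \<in> T"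
    unfolding l'_def using l by (rule someI[where P = "\<lambda>l. 0 < l \<and> (1 - l) *\<^sub>R x + l *\<^sub>R y \<in> T", OF conjI])
  then have "- ln l' + f ((1 - l') *\<^sub>R x + l' *\<^sub>R y) = - ln l + f ((1 - l) *\<^sub>R x + l *\<^sub>R y)"
    using log_affine_rescale[OF aff _ _ l(1) l(2)] by simp
  then show ?thesis
    unfolding tangent_ext_def Let_def l'_def[symmetric] .
qed

lemma funk_converges_tangent_ext:
  assumes T: "open_cone T" and x: "x \<in> closure T" "x \<notin> T"
    and aff: "\<And>l y. 0 < l \<Longrightarrow> y \<in> T \<Longrightarrow> (1 - l) *\<^sub>R x + l *\<^sub>R y \<in> T \<Longrightarrow>
      f ((1 - l) *\<^sub>R x + l *\<^sub>R y) = ln l + f y"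
    and qC: "\<And>m. q m \<in> tangent_cone T x"
    and lim: "\<And>y. y \<in> T \<Longrightarrow>
      (\<lambda>m. funk (tangent_cone T x) y (q m) - funk (tangent_cone T x) b (q m)) \<longlonglongrightarrow> f y"
  shows "funk_converges (tangent_cone T x) b q (tangent_ext T x f)"
  unfolding funk_converges_def
proof (intro conjI allI ballI)
  let ?C = "tangent_cone T x"
  show "q m \<in> ?C" for m
    using qC .
  fix z assume z: "z \<in> ?C"
  obtain l where l: "0 < l" "(1 - l) *\<^sub>R x + l *\<^sub>R z \<in> T"
    using tangent_cone_convex_comb_in_cone[OF T z] by blast
  define w where "w = (1 - l) *\<^sub>R x + l *\<^sub>R z"
  have "(\<lambda>m. funk ?C z (q m) - funk ?C b (q m)) = (\<lambda>m. (funk ?C w (q m) - funk ?C b (q m)) - ln l)"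
    using funk_tangent_cone_affine[OF T x z qC l(1)] by (simp add: w_def)
  moreover have "(\<lambda>m. (funk ?C w (q m) - funk ?C b (q m)) - ln l) \<longlonglongrightarrow> f w - ln l"
    using lim[OF l(2)] unfolding w_def by (rule tendsto_diff[OF _ tendsto_const])
  ultimately show "(\<lambda>m. funk ?C z (q m) - funk ?C b (q m)) \<longlonglongrightarrow> tangent_ext T x f z"
    using tangent_ext_eq[OF aff l] by (simp add: w_def)
qed

lemma tangent_ext_in_K_or_in_B:
  assumes T: "open_cone T" and b: "b \<in> T" and x: "x \<in> closure T" "x \<notin> T"
    and p: "funk_converges T b p f" "p \<longlonglongrightarrow> x"
    and ag: "almost_geodesic T q" and q: "funk_converges T b q f"
  shows "in_K (tangent_cone T x) b (tangent_ext T x f) \<or> in_B (tangent_cone T x) b (tangent_ext T x f)"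
proof -
  let ?C = "tangent_cone T x"
  have C: "open_cone ?C" and sub: "T \<subseteq> ?C"
    using open_cone_tangent_cone[OF T x] subset_tangent_cone[OF T x(1)] .
  have qC: "q m \<in> ?C" for m
    using sub funk_converges_in[OF q] by blast
  obtain \<delta> where \<delta>: "\<delta> \<longlonglongrightarrow> 0" and defect: "\<And>n m k. n \<le> m \<Longrightarrow> m \<le> k \<Longrightarrow>
      funk T (q n) (q m) + funk T (q m) (q k) \<le> funk T (q n) (q k) + \<delta> n"
    using almost_geodesic_defect[OF T ag] by blast
  have inv: "\<And>s c. s \<in> T \<Longrightarrow> 0 < c \<Longrightarrow> f (s + c *\<^sub>R x) = f s"
    using funk_limit_boundary_translation[OF T x p] .
  have le: "\<And>y s. y \<in> T \<Longrightarrow> s \<in> T \<Longrightarrow> f y \<le> funk ?C y s + f s"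
    using funk_limit_le_tangent_funk[OF T x q inv] .
  note lim = funk_converges_supercone[OF T C sub b q funk_limit_busemann[OF T b q \<delta> defect] le]
  have "funk_converges ?C b q (tangent_ext T x f)"
    using funk_converges_tangent_ext[OF T x funk_limit_boundary_affine[OF T x p] qC lim] .
  moreover have "almost_geodesic ?C q"
    using almost_geodesic_supercone[OF T C sub ag q defect le] .
  ultimately show ?thesis
    unfolding in_B_def funk_horofunction_def by blast
qed

theorem mainTheorem17:
  fixes T :: "'a::euclidean_space set" and b x :: 'a and f :: "'a \<Rightarrow> real"
  assumes "open_cone T" and "b \<in> T"
    and "x \<in> frontier T" and "x \<notin> zero_class T"
    and "in_B T b f" and "in_A T b x f"
  shows "(\<forall>l>0. \<forall>y\<in>T. (1 - l) *\<^sub>R x + l *\<^sub>R y \<in> T \<longrightarrow>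
            f ((1 - l) *\<^sub>R x + l *\<^sub>R y) = ln l + f y)
    \<and> (\<forall>y\<in>tangent_cone T x. \<forall>l1>0. \<forall>l2>0.
            (1 - l1) *\<^sub>R x + l1 *\<^sub>R y \<in> T \<longrightarrow> (1 - l2) *\<^sub>R x + l2 *\<^sub>R y \<in> T \<longrightarrow>
            - ln l1 + f ((1 - l1) *\<^sub>R x + l1 *\<^sub>R y) = - ln l2 + f ((1 - l2) *\<^sub>R x + l2 *\<^sub>R y))
    \<and> (\<forall>y\<in>tangent_cone T x. \<exists>l>0. (1 - l) *\<^sub>R x + l *\<^sub>R y \<in> T)
    \<and> (in_K (tangent_cone T x) b (tangent_ext T x f) \<or> in_B (tangent_cone T x) b (tangent_ext T x f))"
proof -
  note T = \<open>open_cone T\<close> and b = \<open>b \<in> T\<close>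
  have x: "x \<in> closure T" "x \<notin> T"
    using assms(1,3) by (auto simp: frontier_def interior_open open_cone_def)
  obtain p where p: "funk_converges T b p f" "p \<longlonglongrightarrow> x"
    using assms(6) by (auto simp: in_A_def)
  obtain q where ag: "almost_geodesic T q" and q: "funk_converges T b q f"
    using assms(5) by (auto simp: in_B_def)
  note aff = funk_limit_boundary_affine[OF T x p]
  show ?thesis
  proof (intro conjI ballI allI impI)
    show "f ((1 - l) *\<^sub>R x + l *\<^sub>R y) = ln l + f y"
      if "0 < l" "y \<in> T" "(1 - l) *\<^sub>R x + l *\<^sub>R y \<in> T" for l y
      using aff[OF that] .
    show "- ln l1 + f ((1 - l1) *\<^sub>R x + l1 *\<^sub>R y) = - ln l2 + f ((1 - l2) *\<^sub>R x + l2 *\<^sub>R y)"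
      if "0 < l1" "0 < l2" "(1 - l1) *\<^sub>R x + l1 *\<^sub>R y \<in> T" "(1 - l2) *\<^sub>R x + l2 *\<^sub>R y \<in> T"
      for y l1 l2
      using log_affine_rescale[OF aff] that by blast
    show "\<exists>l>0. (1 - l) *\<^sub>R x + l *\<^sub>R y \<in> T" if "y \<in> tangent_cone T x" for y
      using tangent_cone_convex_comb_in_cone[OF T that] .
  qed (rule tangent_ext_in_K_or_in_B[OF T b x p ag q])
qed

end
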